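(* Let $m$ be a positive integer, $K\subseteq\mathbb{R}$, $\gamma:K\to\mathbb{H}$, $X\subseteq K$ with $\#X=m+1$, $a,b\in X$, and $p\in\mathbb{H}$. Then $$A[X,p*\gamma;a,b]=A[X,\gamma;a,b]\quad\text{and}\quad V[X,p*\gamma;a,b]=V[X,\gamma;a,b],$$ where $p*\gamma$ is the map $t\mapsto p*\gamma(t)$.
   Context: $\mathbb{H}$ is $\mathbb{R}^3$ with group law $(x,y,z)*(x',y',z')=(x+x',\,y+y',\,z+z'+2(yx'-xy'))$. For a set $X$ of $m+1$ distinct points and $\phi:X\to\mathbb{R}$, $P(X;\phi)$ denotes the unique polynomial of degree $\le m$ agreeing with $\phi$ on $X$ (Newton interpolation polynomial). For $\gamma=(f,g,h)$, $P_f=P(X;f)$, $P_g=P(X;g)$, and $a,b\in X$: $A[X,\gamma;a,b]=h(b)-h(a)-2\int_a^b(P_f'P_g-P_g'P_f)$, $V[X,\gamma;a,b]=\operatorname{diam}(X)^{2m}+\operatorname{diam}(X)^m\int_a^b(|P_f'|+|P_g'|)$. *)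

theory Defs
  imports "HOL-Analysis.Analysis" "HOL-Computational_Algebra.Polynomial"
begin

type_synonym heis = "real \<times> real \<times> real"

definition hmult :: "heis \<Rightarrow> heis \<Rightarrow> heis" where
  "hmult p q = (case p of (x, y, z) \<Rightarrow> case q of (x', y', z') \<Rightarrow>
      (x + x', y + y', z + z' + 2 * (y * x' - x * y')))"

definition interp :: "real set \<Rightarrow> (real \<Rightarrow> real) \<Rightarrow> real poly" where
  "interp X phi = (THE P. degree P \<le> card X - 1 \<and> (\<forall>x\<in>X. poly P x = phi x))"

definition oint :: "real \<Rightarrow> real \<Rightarrow> (real \<Rightarrow> real) \<Rightarrow> real" where
  "oint a b f = (if a \<le> b then integral {a..b} f else - integral {b..a} f)"

definition fstc :: "(real \<Rightarrow> heis) \<Rightarrow> real \<Rightarrow> real" where "fstc \<gamma> t = fst (\<gamma> t)"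
definition sndc :: "(real \<Rightarrow> heis) \<Rightarrow> real \<Rightarrow> real" where "sndc \<gamma> t = fst (snd (\<gamma> t))"
definition thdc :: "(real \<Rightarrow> heis) \<Rightarrow> real \<Rightarrow> real" where "thdc \<gamma> t = snd (snd (\<gamma> t))"

definition Aq :: "real set \<Rightarrow> (real \<Rightarrow> heis) \<Rightarrow> real \<Rightarrow> real \<Rightarrow> real" where
  "Aq X \<gamma> a b = (let Pf = interp X (fstc \<gamma>); Pg = interp X (sndc \<gamma>) in
     thdc \<gamma> b - thdc \<gamma> a
     - 2 * oint a b (\<lambda>t. poly (pderiv Pf) t * poly Pg t - poly (pderiv Pg) t * poly Pf t))"

definition Vq :: "nat \<Rightarrow> real set \<Rightarrow> (real \<Rightarrow> heis) \<Rightarrow> real \<Rightarrow> real \<Rightarrow> real" where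
  "Vq m X \<gamma> a b = (let Pf = interp X (fstc \<gamma>); Pg = interp X (sndc \<gamma>) in
     diameter X ^ (2 * m) + diameter X ^ m * oint a b (\<lambda>t. \<bar>poly (pderiv Pf) t\<bar> + \<bar>poly (pderiv Pg) t\<bar>))"

end

theory Submission
  imports Defs
begin

text \<open>Left translation by p = (x0, y0, z0) adds the constants x0 and y0 to the first two
  components and z0 + 2 (y0 f - x0 g) to the third. By uniqueness of interpolation the
  interpolants only pick up the same constants, so their derivatives, and with them V, are
  unchanged. The area integrand changes by the derivative of y0 P_f - x0 P_g; since
  P_f and P_g interpolate f and g at a and b, its integral from a to b is exactly the change
  2 (y0 f - x0 g)(b) - 2 (y0 f - x0 g)(a) of the third component, so A is unchanged too.\<close>

lemma interpolating_poly_exists: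
  fixes phi :: "real \<Rightarrow> real"
  assumes "finite X"
  shows "\<exists>P. degree P \<le> card X - 1 \<and> (\<forall>x\<in>X. poly P x = phi x)"
  using assms
proof (induction X rule: finite_induct)
  case empty
  show ?case by (intro exI[of _ 0]) auto
next
  case (insert x Y)
  then obtain P where P: "degree P \<le> card Y - 1" "\<forall>y\<in>Y. poly P y = phi y" by blast
  define R where "R = (\<Prod>y\<in>Y. [:-y, 1:])"
  have deg_R: "degree R \<le> card Y"
    unfolding R_def using insert(1) by (rule order.trans[OF degree_prod_sum_le]) (simp add: o_def)
  have R_Y: "\<forall>y\<in>Y. poly R y = 0"
    unfolding R_def poly_prod using insert(1) by (auto intro: prod_zero)
  have R_x: "poly R x \<noteq> 0"
    unfolding R_def poly_prod using insert(1,2) by auto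
  define Q where "Q = P + smult ((phi x - poly P x) / poly R x) R"
  have "degree Q \<le> card Y"
    using P(1) deg_R degree_smult_le degree_add_le unfolding Q_def
    by (metis (no_types, lifting) diff_le_self le_trans)
  then have "degree Q \<le> card (insert x Y) - 1" using insert(1,2) by simp
  moreover have "\<forall>y\<in>insert x Y. poly Q y = phi y"
    using P(2) R_Y R_x unfolding Q_def by auto
  ultimately show ?case by blast
qed

lemma interpolating_poly_ex1:
  fixes phi :: "real \<Rightarrow> real"
  assumes "finite X" "X \<noteq> {}"
  shows "\<exists>!P. degree P \<le> card X - 1 \<and> (\<forall>x\<in>X. poly P x = phi x)"
proof (rule ex_ex1I)
  show "\<exists>P. degree P \<le> card X - 1 \<and> (\<forall>x\<in>X. poly P x = phi x)"
    using interpolating_poly_exists[OF assms(1)] .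
next
  have "card X > 0" using assms by (simp add: card_gt_0_iff)
  then show "P = Q"
    if "degree P \<le> card X - 1 \<and> (\<forall>x\<in>X. poly P x = phi x)"
       "degree Q \<le> card X - 1 \<and> (\<forall>x\<in>X. poly Q x = phi x)" for P Q
    using that by (intro poly_eqI_degree[of X]) auto
qed

lemma degree_interp:
  assumes "finite X" "X \<noteq> {}"
  shows "degree (interp X phi) \<le> card X - 1"
  using theI'[OF interpolating_poly_ex1[OF assms]] unfolding interp_def by blast

lemma poly_interp:
  assumes "finite X" "x \<in> X"
  shows "poly (interp X phi) x = phi x"
  using theI'[OF interpolating_poly_ex1[OF assms(1)]] assms(2) unfolding interp_def by blast

lemma interp_unique:
  fixes phi :: "real \<Rightarrow> real"
  assumes "finite X" "X \<noteq> {}" "degree P \<le> card X - 1" "\<forall>x\<in>X. poly P x = phi x"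
  shows "interp X phi = P"
  unfolding interp_def using interpolating_poly_ex1[OF assms(1,2), of phi] assms(3,4)
  by (intro the1_equality) auto

lemma interp_add_const:
  assumes "finite X" "X \<noteq> {}"
  shows "interp X (\<lambda>t. c + phi t) = interp X phi + [:c:]"
proof (rule interp_unique[OF assms])
  show "degree (interp X phi + [:c:]) \<le> card X - 1"
    using degree_interp[OF assms] by (simp add: degree_add_le)
  show "\<forall>x\<in>X. poly (interp X phi + [:c:]) x = c + phi x"
    using poly_interp[OF assms(1)] by simp
qed

lemma oint_add:
  fixes F G :: "real \<Rightarrow> real"
  assumes "continuous_on UNIV F" "continuous_on UNIV G"
  shows "oint a b (\<lambda>t. F t + G t) = oint a b F + oint a b G"
proof -
  have "H integrable_on {u..v}" if "continuous_on UNIV H" for H :: "real \<Rightarrow> real" and u v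
    using that continuous_on_subset integrable_continuous_interval by blast
  then show ?thesis
    unfolding oint_def using assms by (simp add: integral_add)
qed

lemma oint_poly_pderiv: "oint a b (poly (pderiv Q)) = poly Q b - poly Q a"
proof -
  have "integral {u..v} (poly (pderiv Q)) = poly Q v - poly Q u" if "u \<le> v" for u v
  proof (rule integral_unique, rule fundamental_theorem_of_calculus[OF that])
    show "\<And>t. t \<in> {u..v} \<Longrightarrow> (poly Q has_vector_derivative poly (pderiv Q) t) (at t within {u..v})"
      by (auto simp: has_real_derivative_iff_has_vector_derivative[symmetric]
               intro: has_field_derivative_at_within poly_DERIV)
  qed
  then show ?thesis by (simp add: oint_def)
qed

lemma fstc_hmult: "fstc (\<lambda>t. hmult p (\<gamma> t)) = (\<lambda>t. fst p + fstc \<gamma> t)"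
  by (auto simp: fstc_def hmult_def split: prod.splits)

lemma sndc_hmult: "sndc (\<lambda>t. hmult p (\<gamma> t)) = (\<lambda>t. fst (snd p) + sndc \<gamma> t)"
  by (auto simp: sndc_def hmult_def split: prod.splits)

lemma thdc_hmult:
  "thdc (\<lambda>t. hmult p (\<gamma> t)) t
     = snd (snd p) + thdc \<gamma> t + 2 * (fst (snd p) * fstc \<gamma> t - fst p * sndc \<gamma> t)"
  by (auto simp: thdc_def fstc_def sndc_def hmult_def split: prod.splits)

lemma area_integrand_add_const:
  fixes Pf Pg :: "real poly"
  shows "poly (pderiv (Pf + [:x0:])) t * poly (Pg + [:y0:]) t
         - poly (pderiv (Pg + [:y0:])) t * poly (Pf + [:x0:]) t
       = (poly (pderiv Pf) t * poly Pg t - poly (pderiv Pg) t * poly Pf t)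
         + poly (pderiv (smult y0 Pf - smult x0 Pg)) t"
  by (simp add: pderiv_add pderiv_pCons pderiv_smult pderiv_diff algebra_simps)

lemma Aq_left_translate:
  assumes "finite X" "a \<in> X" "b \<in> X"
  shows "Aq X (\<lambda>t. hmult p (\<gamma> t)) a b = Aq X \<gamma> a b"
proof -
  define Pf where "Pf = interp X (fstc \<gamma>)"
  define Pg where "Pg = interp X (sndc \<gamma>)"
  have "X \<noteq> {}" using assms(2) by auto
  then have interps: "interp X (fstc (\<lambda>t. hmult p (\<gamma> t))) = Pf + [:fst p:]"
      "interp X (sndc (\<lambda>t. hmult p (\<gamma> t))) = Pg + [:fst (snd p):]"
    unfolding fstc_hmult sndc_hmult Pf_def Pg_def using interp_add_const assms(1) by blast+
  have endpoint_values: "poly Pf a = fstc \<gamma> a" "poly Pf b = fstc \<gamma> b"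
      "poly Pg a = sndc \<gamma> a" "poly Pg b = sndc \<gamma> b"
    unfolding Pf_def Pg_def using poly_interp assms by blast+
  define Q where "Q = smult (fst (snd p)) Pf - smult (fst p) Pg"
  have "continuous_on UNIV (\<lambda>t. poly (pderiv Pf) t * poly Pg t - poly (pderiv Pg) t * poly Pf t)"
    "continuous_on UNIV (poly (pderiv Q))"
    by (intro continuous_intros)+
  then have "oint a b (\<lambda>t. (poly (pderiv Pf) t * poly Pg t - poly (pderiv Pg) t * poly Pf t)
                             + poly (pderiv Q) t)
      = oint a b (\<lambda>t. poly (pderiv Pf) t * poly Pg t - poly (pderiv Pg) t * poly Pf t)
        + (poly Q b - poly Q a)"
    using oint_add oint_poly_pderiv by presburger
  then show ?thesis
    unfolding Aq_def Let_def interps area_integrand_add_const Q_def[symmetric]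
    by (simp add: thdc_hmult endpoint_values Q_def Pf_def[symmetric] Pg_def[symmetric] algebra_simps)
qed

lemma Vq_left_translate:
  assumes "finite X" "X \<noteq> {}"
  shows "Vq m X (\<lambda>t. hmult p (\<gamma> t)) a b = Vq m X \<gamma> a b"
  unfolding Vq_def Let_def fstc_hmult sndc_hmult interp_add_const[OF assms]
  by (simp add: pderiv_add pderiv_pCons)

theorem lemma4p3:
  fixes m :: nat and K X :: "real set" and \<gamma> :: "real \<Rightarrow> heis" and a b :: real and p :: heis
  assumes "m > 0" and "X \<subseteq> K" and "finite X" and "card X = m + 1" and "a \<in> X" and "b \<in> X"
  shows "Aq X (\<lambda>t. hmult p (\<gamma> t)) a b = Aq X \<gamma> a b
       \<and> Vq m X (\<lambda>t. hmult p (\<gamma> t)) a b = Vq m X \<gamma> a b"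
  using Aq_left_translate[OF assms(3,5,6)] Vq_left_translate[OF assms(3)] assms(5) by blast

end
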